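(* (Coercivity.) Consider the bilinear form $a_h$ on $V_h(\tilde\Omega_h)$ defined in the context. If the Nitsche parameter $\alpha$ is sufficiently large and the quantity $\hat h_{\tilde\Gamma_h}$ is sufficiently small, then there exists a constant $C_a>0$ independent of the mesh size such that $$a_h(u_h,u_h)\ \ge\ C_a\,\|u_h\|_a^2\qquad\forall u_h\in V_h(\tilde\Omega_h),$$ where $\|u_h\|_a^2=\|\nabla u_h\|^2_{0,\tilde\Omega_h}+\|h^{-1/2}S_h u_h\|^2_{0,\tilde\Gamma_h}$.
   Context: Let $n_d\in\{2,3\}$ and let $\Omega\subset\mathbb{R}^{n_d}$ be a bounded connected open set with Lipschitz boundary $\Gamma$. For a measurable set $A$ put $l(A)=\mathrm{meas}_{n_d}(A)^{1/n_d}$. Let $\mathcal D\supseteq\overline\Omega$ be a closed domain and $\{\mathcal T_h\}$ a family of admissible, shape-regular simplicial triangulations of $\mathcal D$. Set $\tilde{\mathcal T}_h=\{T\in\mathcal T_h: T\subset\overline\Omega\}$, the surrogate domain $\tilde\Omega_h=\mathrm{int}\big(\bigcup_{T\in\tilde{\mathcal T}_h}T\big)\subseteq\Omega$, the surrogate boundary $\tilde\Gamma_h=\partial\tilde\Omega_h$ with outward unit normal $\tilde{\boldsymbol n}$. Let $h_T$ be the diameter of $T$ and $h$ the piecewise constant function with $h|_T=h_T$ (on $\tilde\Gamma_h$, $h$ is the size of the adjacent element); $\hat h_T=h_T/l(\tilde\Omega_h)$, $h_{\tilde\Gamma_h}=\max\{h_T:T\in\tilde{\mathcal T}_h,\ T\cap\tilde\Gamma_h\neq\emptyset\}$,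 $\hat h_{\tilde\Gamma_h}=h_{\tilde\Gamma_h}/l(\tilde\Omega_h)$. A map $\boldsymbol M_h:\tilde\Gamma_h\to\Gamma$ is given, and $\boldsymbol d(\tilde{\boldsymbol x})=\boldsymbol M_h(\tilde{\boldsymbol x})-\tilde{\boldsymbol x}$, written $\boldsymbol d=\|\boldsymbol d\|\boldsymbol\nu$ with $\boldsymbol\nu$ a unit vector. Standing assumption: there are constants $c_d>0$, $\zeta>0$ with $\|\boldsymbol d(\tilde{\boldsymbol x})\|\le c_d\,h_T\,\hat h_T^{\zeta}$ for all $\tilde{\boldsymbol x}\in\tilde\Gamma_h\cap T$, $T\in\tilde{\mathcal T}_h$. The shift operator is $S_hv=v+\nabla v\cdot\boldsymbol d$ on $\tilde\Gamma_h$. $V_h(\tilde\Omega_h)=\{v_h\in C^0(\tilde\Omega_h): v_h|_T\in\mathcal P^1(T)\ \forall T\in\tilde{\mathcal T}_h\}$. Writing $(\cdot,\cdot)_{\tilde\Omega_h}$ and $\langle\cdot,\cdot\rangle_{\tilde\Gamma_h}$ for $L^2$ inner products and $\alpha>0$ for a parameter, $$a_h(u,w)=(\nabla u,\nabla w)_{\tilde\Omega_h}-\langle\nabla u\cdot\tilde{\boldsymbol n},S_hw\rangle_{\tilde\Gamma_h}-\langle S_hu,\nabla w\cdot\tilde{\boldsymbol n}\rangle_{\tilde\Gamma_h}+\langle\alpha h^{-1}S_hu,S_hw\rangle_{\tilde\Gamma_h}+\langle\nabla u\cdot\tilde{\boldsymbol n},\nabla w\cdot\boldsymbol d\rangle_{\tilde\Gamma_h}.$$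 "Independent of the mesh size" means independent of $h$ (it may depend on the shape-regularity of the meshes, $c_d,\zeta$ and $\alpha$). *)

theory Defs
  imports "HOL-Analysis.Analysis"
begin

definition lipschitz_boundary :: "'a::euclidean_space set \<Rightarrow> bool" where
  "lipschitz_boundary \<Omega> \<longleftrightarrow>
     (\<forall>x\<in>frontier \<Omega>. \<exists>r>0. \<exists>e L \<phi>. norm e = 1 \<and>
        lipschitz_on L {z. z \<bullet> e = 0} (\<phi> :: 'a \<Rightarrow> real) \<and>
        \<Omega> \<inter> ball x r = {y \<in> ball x r. y \<bullet> e < \<phi> (y - (y \<bullet> e) *\<^sub>R e)})"

definition lsize :: "'a::euclidean_space set \<Rightarrow> real" where
  "lsize A = measure lebesgue A powr (1 / real DIM('a))"

definition admissible_triangulation :: "'a::euclidean_space set set \<Rightarrow> 'a set \<Rightarrow> bool" where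
  "admissible_triangulation Th D \<longleftrightarrow>
     finite Th \<and> (\<forall>T\<in>Th. int DIM('a) simplex T) \<and> \<Union>Th = D \<and>
     (\<forall>T1\<in>Th. \<forall>T2\<in>Th. (T1 \<inter> T2) face_of T1 \<and> (T1 \<inter> T2) face_of T2)"

definition inradius :: "'a::euclidean_space set \<Rightarrow> real" where
  "inradius T = Sup {r. \<exists>x. ball x r \<subseteq> T}"

definition shape_regular :: "real \<Rightarrow> 'a::euclidean_space set set \<Rightarrow> bool" where
  "shape_regular \<sigma> Th \<longleftrightarrow> (\<forall>T\<in>Th. diameter T \<le> \<sigma> * inradius T)"

definition tildeT :: "'a::euclidean_space set set \<Rightarrow> 'a set \<Rightarrow> 'a set set" where
  "tildeT Th \<Omega> = {T \<in> Th. T \<subseteq> closure \<Omega>}"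

definition sdom :: "'a::euclidean_space set set \<Rightarrow> 'a set" where
  "sdom Tt = interior (\<Union>Tt)"

definition sbdry :: "'a::euclidean_space set set \<Rightarrow> 'a set" where
  "sbdry Tt = frontier (sdom Tt)"

definition hGamma :: "'a::euclidean_space set set \<Rightarrow> real" where
  "hGamma Tt = Max {diameter T | T. T \<in> Tt \<and> T \<inter> sbdry Tt \<noteq> {}}"

definition hatGamma :: "'a::euclidean_space set set \<Rightarrow> real" where
  "hatGamma Tt = hGamma Tt / lsize (sdom Tt)"

definition hat_h :: "'a::euclidean_space set set \<Rightarrow> 'a set \<Rightarrow> real" where
  "hat_h Tt T = diameter T / lsize (sdom Tt)"

definition bdry_facets :: "'a::euclidean_space set set \<Rightarrow> ('a set \<times> 'a set) set" where
  "bdry_facets Tt = {(T, F). T \<in> Tt \<and> F facet_of T \<and> (\<forall>T'\<in>Tt. F facet_of T' \<longrightarrow> T' = T)}"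

definition outer_normal :: "'a::euclidean_space set \<Rightarrow> 'a set \<Rightarrow> 'a" where
  "outer_normal T F = (SOME \<nu>. norm \<nu> = 1 \<and> (\<forall>x\<in>F. \<forall>y\<in>F. \<nu> \<bullet> (x - y) = 0) \<and>
                               (\<forall>q\<in>T. \<forall>y\<in>F. \<nu> \<bullet> (q - y) \<le> 0))"

definition std_simplex :: "nat \<Rightarrow> (nat \<Rightarrow> real) set" where
  "std_simplex m = {t. (\<forall>i<m. 0 \<le> t i) \<and> (\<Sum>i<m. t i) \<le> 1}"

text \<open>Surface integral over an (n_d-1)-dimensional flat simplex F: affine
  parametrisation from the standard (n_d-1)-simplex, with the Gram-determinant
  surface element sqrt(det G).\<close>
definition facet_integral :: "'a::euclidean_space set \<Rightarrow> ('a \<Rightarrow> real) \<Rightarrow> real" where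
  "facet_integral F g =
    (let p = (SOME p. F = convex hull (p ` {..<DIM('a)}));
         m = DIM('a) - 1;
         v = (\<lambda>i. p (Suc i) - p 0);
         G = (\<lambda>i j. v i \<bullet> v j);
         J = sqrt (\<Sum>\<pi> | \<pi> permutes {..<m}. of_int (sign \<pi>) * (\<Prod>i<m. G i (\<pi> i)))
     in \<integral>t. indicator (std_simplex m) t * g (p 0 + (\<Sum>i<m. t i *\<^sub>R v i)) * J
          \<partial>(PiM {..<m} (\<lambda>_. lborel)))"

text \<open>integral over tilde Gamma_h, facet by facet; the integrand may depend on the
  adjacent element T (for h, gradients, normal)\<close>
definition bdry_int ::
  "'a::euclidean_space set set \<Rightarrow> ('a set \<Rightarrow> 'a set \<Rightarrow> 'a \<Rightarrow> real) \<Rightarrow> real" where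
  "bdry_int Tt f = (\<Sum>(T, F)\<in>bdry_facets Tt. facet_integral F (f T F))"

definition Vh :: "'a::euclidean_space set set \<Rightarrow> ('a \<Rightarrow> real) set" where
  "Vh Tt = {u. continuous_on (sdom Tt) u \<and> (\<forall>T\<in>Tt. \<exists>a c. \<forall>x\<in>T. u x = a \<bullet> x + c)}"

definition gradT :: "'a::euclidean_space set \<Rightarrow> ('a \<Rightarrow> real) \<Rightarrow> 'a" where
  "gradT T u = (SOME a. \<exists>c. \<forall>x\<in>T. u x = a \<bullet> x + c)"

definition Sh :: "('a::euclidean_space \<Rightarrow> 'a) \<Rightarrow> ('a \<Rightarrow> real) \<Rightarrow> 'a set \<Rightarrow> 'a \<Rightarrow> real" where
  "Sh M u T x = u x + gradT T u \<bullet> (M x - x)"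

definition ah :: "real \<Rightarrow> 'a::euclidean_space set set \<Rightarrow> ('a \<Rightarrow> 'a)
                  \<Rightarrow> ('a \<Rightarrow> real) \<Rightarrow> ('a \<Rightarrow> real) \<Rightarrow> real" where
  "ah \<alpha> Tt M u w =
     (\<Sum>T\<in>Tt. set_lebesgue_integral lebesgue T (\<lambda>x. gradT T u \<bullet> gradT T w))
     - bdry_int Tt (\<lambda>T F x. (gradT T u \<bullet> outer_normal T F) * Sh M w T x)
     - bdry_int Tt (\<lambda>T F x. Sh M u T x * (gradT T w \<bullet> outer_normal T F))
     + bdry_int Tt (\<lambda>T F x. \<alpha> / diameter T * Sh M u T x * Sh M w T x)
     + bdry_int Tt (\<lambda>T F x. (gradT T u \<bullet> outer_normal T F) * (gradT T w \<bullet> (M x - x)))"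

definition norm_a_sq :: "'a::euclidean_space set set \<Rightarrow> ('a \<Rightarrow> 'a) \<Rightarrow> ('a \<Rightarrow> real) \<Rightarrow> real" where
  "norm_a_sq Tt M u =
     (\<Sum>T\<in>Tt. set_lebesgue_integral lebesgue T (\<lambda>x. (norm (gradT T u))\<^sup>2))
     + bdry_int Tt (\<lambda>T F x. (Sh M u T x)\<^sup>2 / diameter T)"

end

theory Submission
  imports Defs
begin

text \<open>Since \<open>\<nabla>u\<^sub>h\<close> is constant on each element, every boundary integrand on a facet \<open>F\<close> of an
  element \<open>T\<close> can be bounded pointwise. Young's inequality absorbs the two consistency terms
  \<open>\<nabla>u\<cdot>n S\<^sub>hu\<close> into the penalty once \<open>\<alpha>\<close> is large, and the displacement
  bound, which gives \<open>|d| \<le> \<eta> h\<close> once \<^const>\<open>hatGamma\<close> is small, makes \<open>\<nabla>u\<cdot>n \<nabla>u\<cdot>d\<close> small.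
  What remains on \<open>F\<close> is at least \<open>-(\<epsilon> + \<eta>) |\<nabla>u|\<^sup>2 h\<^sup>n\<close>, as the facet has area at most
  \<open>h\<^sup>n\<^sup>-\<^sup>1\<close>, and shape regularity gives \<open>h\<^sup>n \<le> K |T|\<close>. An element has at most \<open>n + 1\<close> facets, so the
  boundary terms cost at most \<open>(\<epsilon> + \<eta>) K (n + 1)\<close> times the Dirichlet energy, and choosing
  \<open>\<epsilon> = \<eta>\<close> small gives coercivity with \<open>C\<^sub>a = 1/2\<close>. No trace inequality, and hence no
  property of \<open>\<Omega>\<close> or of \<open>M\<^sub>h\<close> beyond the displacement bound, is needed.\<close>

text \<open>The quantities bound by \<open>let\<close> in \<^const>\<open>facet_integral\<close>: an affine parametrisation
  of the facet by the standard simplex and its Gram-determinant surface element.\<close>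
definition facet_vertices :: "'a::euclidean_space set \<Rightarrow> nat \<Rightarrow> 'a" where
  "facet_vertices F = (SOME p. F = convex hull (p ` {..<DIM('a)}))"

definition facet_param :: "'a::euclidean_space set \<Rightarrow> (nat \<Rightarrow> real) \<Rightarrow> 'a" where
  "facet_param F t = facet_vertices F 0
     + (\<Sum>i<DIM('a)-1. t i *\<^sub>R (facet_vertices F (Suc i) - facet_vertices F 0))"

definition facet_jacobian :: "'a::euclidean_space set \<Rightarrow> real" where
  "facet_jacobian F = sqrt (\<Sum>\<pi> | \<pi> permutes {..<DIM('a)-1}. of_int (sign \<pi>) *
      (\<Prod>i<DIM('a)-1. (facet_vertices F (Suc i) - facet_vertices F 0)
                        \<bullet> (facet_vertices F (Suc (\<pi> i)) - facet_vertices F 0)))"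

abbreviation param_space :: "nat \<Rightarrow> (nat \<Rightarrow> real) measure" where
  "param_space m \<equiv> PiM {..<m} (\<lambda>_. lborel)"

lemma facet_integral_param:
  fixes F :: "'a::euclidean_space set"
  shows "facet_integral F g = (\<integral>t. indicator (std_simplex (DIM('a)-1)) t
           * g (facet_param F t) * facet_jacobian F \<partial>param_space (DIM('a)-1))"
  by (simp add: facet_integral_def Let_def facet_vertices_def facet_param_def facet_jacobian_def)

lemma facet_param_measurable [measurable]:
  fixes F :: "'a::euclidean_space set"
  shows "facet_param F \<in> borel_measurable (param_space (DIM('a)-1))"
  unfolding facet_param_def[abs_def] by measurable

lemma std_simplex_measurable [measurable]:
  "(indicator (std_simplex m) :: _ \<Rightarrow> real) \<in> borel_measurable (param_space m)"
proof -
  have "(indicator (std_simplex m) :: _ \<Rightarrow> real)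
          = (\<lambda>t. if (\<forall>i<m. 0 \<le> t i) \<and> (\<Sum>i<m. t i) \<le> 1 then 1 else 0)"
    by (auto simp: std_simplex_def indicator_def fun_eq_iff)
  also have "\<dots> \<in> borel_measurable (param_space m)" by measurable
  finally show ?thesis .
qed

definition unit_cube :: "nat \<Rightarrow> (nat \<Rightarrow> real) set" where
  "unit_cube m = PiE {..<m} (\<lambda>_. {0..1})"

lemma unit_cube_sets: "unit_cube m \<in> sets (param_space m)"
  unfolding unit_cube_def by (rule sets_PiM_I_finite) auto

lemma emeasure_unit_cube: "emeasure (param_space m) (unit_cube m) = 1"
proof -
  interpret product_sigma_finite "\<lambda>_::nat. lborel :: real measure"
    by (simp add: product_sigma_finite_def lborel.sigma_finite_measure_axioms)
  show ?thesis unfolding unit_cube_def by (subst emeasure_PiM) auto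
qed

lemma measure_unit_cube: "measure (param_space m) (unit_cube m) = 1"
  by (simp add: measure_def emeasure_unit_cube)

lemma integrable_unit_cube: "integrable (param_space m) (\<lambda>t. indicator (unit_cube m) t * (c::real))"
  using emeasure_unit_cube unit_cube_sets by (intro integrable_mult_left) auto

lemma std_simplex_subset_unit_cube:
  assumes "t \<in> space (param_space m)" "t \<in> std_simplex m"
  shows "t \<in> unit_cube m"
proof -
  have "t i \<le> 1" if "i < m" for i
  proof -
    have "t i \<le> (\<Sum>j<m. t j)"
      by (rule member_le_sum) (use assms that in \<open>auto simp: std_simplex_def\<close>)
    then show ?thesis using assms by (auto simp: std_simplex_def)
  qed
  then show ?thesis using assms by (auto simp: unit_cube_def space_PiM std_simplex_def PiE_iff)
qed

lemma full_simplex_props: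
  fixes T :: "'a::euclidean_space set"
  assumes "int DIM('a) simplex T"
  shows "compact T" "convex T" "aff_dim T = DIM('a)" "interior T \<noteq> {}" "polytope T"
proof -
  obtain C where C: "finite C" "T = convex hull C"
    using assms by (auto simp: simplex)
  show "compact T" "convex T" "polytope T"
    using C by (auto simp: compact_convex_hull finite_imp_compact polytope_def)
  show ad: "aff_dim T = DIM('a)" by (rule aff_dim_simplex[OF assms])
  then have "rel_interior T = interior T" by (intro rel_interior_interior) (simp add: aff_dim_eq_full)
  moreover have "T \<noteq> {}" using ad by auto
  ultimately show "interior T \<noteq> {}" using rel_interior_eq_empty \<open>convex T\<close> by metis
qed

lemma diameter_full_simplex_pos:
  fixes T :: "'a::euclidean_space set"
  assumes "int DIM('a) simplex T"
  shows "0 < diameter T"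
proof -
  obtain x r where "r > 0" "ball x r \<subseteq> T"
    using full_simplex_props(4)[OF assms]
    by (meson ex_in_conv open_contains_ball open_interior interior_subset order_trans)
  then show ?thesis
    using diameter_subset[of "ball x r" T] compact_imp_bounded[OF full_simplex_props(1)[OF assms]] by auto
qed

lemma mem_Union_others_if_not_interior:
  fixes Tt :: "'a::topological_space set set"
  assumes "finite Tt" "\<forall>S\<in>Tt. closed S" "z \<in> interior (\<Union>Tt)" "z \<notin> interior T"
  shows "z \<in> \<Union>(Tt - {T})"
proof -
  let ?O = "interior (\<Union>Tt) - T"
  have "closed (\<Union>(Tt - {T}))" using assms(1,2) by (intro closed_Union) auto
  moreover have "?O \<subseteq> \<Union>(Tt - {T})" using interior_subset by blast
  ultimately have cl: "closure ?O \<subseteq> \<Union>(Tt - {T})" by (rule closure_minimal[rotated])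
  have "z \<in> closure ?O"
  proof (rule ccontr)
    assume "z \<notin> closure ?O"
    define V where "V = - closure ?O"
    have V: "open V" "z \<in> V" "V \<inter> ?O = {}"
      using \<open>z \<notin> closure ?O\<close> closure_subset[of ?O] by (auto simp: V_def)
    then have "V \<inter> interior (\<Union>Tt) \<subseteq> T" by blast
    then have "V \<inter> interior (\<Union>Tt) \<subseteq> interior T" using V(1) by (intro interior_maximal) auto
    then show False using V(2) assms(3,4) by blast
  qed
  then show ?thesis using cl by blast
qed

lemma facet_of_full_simplex:
  fixes T :: "'a::euclidean_space set"
  assumes "int DIM('a) simplex T" "F facet_of T"
  shows "F = convex hull (facet_vertices F ` {..<DIM('a)})" "F \<subseteq> T" "compact F"
proof -
  obtain C where C: "finite C" "\<not> affine_dependent C" "int (card C) = DIM('a) + 1" "T = convex hull C"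
    using assms by (auto simp: simplex)
  obtain u where u: "u \<in> C" "F = convex hull (C - {u})"
    using assms(2) C facet_of_convex_hull_affine_independent by metis
  have "card (C - {u}) = DIM('a)" using C u by auto
  then obtain p where "p ` {..<DIM('a)} = C - {u}"
    using ex_bij_betw_nat_finite[of "C - {u}"] C by (auto simp: bij_betw_def atLeast0LessThan)
  then have "\<exists>p. F = convex hull (p ` {..<DIM('a)})" using u by metis
  then show F: "F = convex hull (facet_vertices F ` {..<DIM('a)})"
    unfolding facet_vertices_def by (rule someI_ex)
  show "F \<subseteq> T" using assms(2) by (simp add: facet_of_def face_of_imp_subset)
  show "compact F" by (subst F) (simp add: compact_convex_hull finite_imp_compact)
qed

lemma facet_param_mem:
  fixes T :: "'a::euclidean_space set"
  assumes "int DIM('a) simplex T" "F facet_of T" "t \<in> std_simplex (DIM('a)-1)"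
  shows "facet_param F t \<in> F"
proof -
  let ?m = "DIM('a) - 1" and ?p = "facet_vertices F"
  have dim: "DIM('a) = Suc ?m" using DIM_positive[where 'a='a] by simp
  note F = facet_of_full_simplex(1)[OF assms(1,2)]
  define w where "w j = (if j = 0 then 1 - (\<Sum>i<?m. t i) else t (j - 1))" for j
  have "(\<Sum>j<Suc ?m. w j *\<^sub>R ?p j) \<in> F"
  proof (rule convex_sum)
    show "convex F" by (subst F) (rule convex_convex_hull)
    show "(\<Sum>j<Suc ?m. w j) = 1" unfolding sum.lessThan_Suc_shift by (simp add: w_def)
    show "0 \<le> w j" if "j \<in> {..<Suc ?m}" for j
      using assms(3) that by (auto simp: w_def std_simplex_def)
    show "?p j \<in> F" if "j \<in> {..<Suc ?m}" for j
      using that dim by (subst F) (auto intro: hull_inc)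
  qed simp
  also have "(\<Sum>j<Suc ?m. w j *\<^sub>R ?p j) = facet_param F t"
    unfolding sum.lessThan_Suc_shift
    by (simp add: w_def facet_param_def scaleR_diff_right sum_subtractf scaleR_diff_left
        scaleR_sum_left algebra_simps)
  finally show ?thesis .
qed

lemma card_facets_full_simplex:
  fixes T :: "'a::euclidean_space set"
  assumes "int DIM('a) simplex T"
  shows "finite {F. F facet_of T}" "card {F. F facet_of T} \<le> Suc DIM('a)"
proof -
  obtain C where C: "finite C" "\<not> affine_dependent C" "int (card C) = DIM('a) + 1" "T = convex hull C"
    using assms by (auto simp: simplex)
  have sub: "{F. F facet_of T} \<subseteq> (\<lambda>u. convex hull (C - {u})) ` C"
    using C facet_of_convex_hull_affine_independent by fastforce
  show "finite {F. F facet_of T}" using sub C by (meson finite_imageI finite_subset)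
  have "card {F. F facet_of T} \<le> card C"
    using card_mono[OF _ sub] card_image_le[of C] C by (meson finite_imageI order_trans)
  then show "card {F. F facet_of T} \<le> Suc DIM('a)" using C by linarith
qed

lemma norm_outer_normal:
  fixes T :: "'a::euclidean_space set"
  assumes "int DIM('a) simplex T" "F facet_of T"
  shows "norm (outer_normal T F) = 1"
proof -
  have "F exposed_face_of T"
    using assms full_simplex_props(5) exposed_face_of_polyhedron polytope_imp_polyhedron
    by (metis facet_of_def)
  then obtain a b where ab: "T \<subseteq> {x. a \<bullet> x \<le> b}" "F = T \<inter> {x. a \<bullet> x = b}"
    by (auto simp: exposed_face_of_def)
  have "a \<noteq> 0"
  proof
    assume "a = 0"
    moreover obtain x where "x \<in> F" using assms(2) by (auto simp: facet_of_def)
    ultimately have "F = T" using ab by auto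
    then show False using assms(2) by simp
  qed
  let ?\<nu> = "a /\<^sub>R norm a"
  have "?\<nu> \<bullet> v = (a \<bullet> v) / norm a" for v by (simp add: divide_inverse_commute)
  then have "norm ?\<nu> = 1 \<and> (\<forall>x\<in>F. \<forall>y\<in>F. ?\<nu> \<bullet> (x - y) = 0) \<and> (\<forall>q\<in>T. \<forall>y\<in>F. ?\<nu> \<bullet> (q - y) \<le> 0)"
    using \<open>a \<noteq> 0\<close> ab by (auto simp: inner_diff_right divide_right_mono)
  then show ?thesis unfolding outer_normal_def by (rule someI2) simp
qed

lemma facet_of_neighbour_simplex:
  fixes T T' :: "'a::euclidean_space set"
  assumes sT: "int DIM('a) simplex T" and sT': "int DIM('a) simplex T'" and "T \<noteq> T'"
    and K: "(T \<inter> T') face_of T" "(T \<inter> T') face_of T'"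
    and F: "F facet_of T" and z: "z \<in> rel_interior F" "z \<in> T'"
  shows "F facet_of T'"
proof -
  have FT: "F face_of T" using F by (simp add: facet_of_def)
  have "F \<subseteq> T \<inter> T'"
    using z rel_interior_subset[of F] face_of_imp_subset[OF FT]
    by (intro subset_of_face_of[OF K(1) face_of_imp_subset[OF FT]]) auto
  then have FK: "F face_of T \<inter> T'" using face_of_subset[OF FT] by blast
  have "T \<inter> T' \<noteq> T"
  proof
    assume "T \<inter> T' = T"
    then have "aff_dim T < aff_dim T'"
      using K(2) \<open>T \<noteq> T'\<close> face_of_aff_dim_lt[OF full_simplex_props(2)[OF sT']] by auto
    then show False using full_simplex_props(3)[OF sT] full_simplex_props(3)[OF sT'] by simp
  qed
  then have "aff_dim (T \<inter> T') < aff_dim T"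
    using face_of_aff_dim_lt[OF full_simplex_props(2)[OF sT] K(1)] by blast
  moreover have "aff_dim F = aff_dim T - 1" using F by (simp add: facet_of_def)
  ultimately have "F = T \<inter> T'"
    using face_of_aff_dim_lt[OF face_of_imp_convex[OF K(1)] FK] by force
  then show ?thesis
    using F K(2) full_simplex_props(3)[OF sT] full_simplex_props(3)[OF sT'] by (simp add: facet_of_def)
qed

lemma bdry_facet_subset_sbdry:
  fixes Tt :: "'a::euclidean_space set set"
  assumes fin: "finite Tt" and sx: "\<forall>T\<in>Tt. int DIM('a) simplex T"
    and conf: "\<forall>T1\<in>Tt. \<forall>T2\<in>Tt. (T1 \<inter> T2) face_of T1 \<and> (T1 \<inter> T2) face_of T2"
    and TF: "(T, F) \<in> bdry_facets Tt"
  shows "F \<subseteq> sbdry Tt"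
proof -
  have T: "T \<in> Tt" and F: "F facet_of T" and uniq: "\<forall>T'\<in>Tt. F facet_of T' \<longrightarrow> T' = T"
    using TF by (auto simp: bdry_facets_def)
  have sT: "int DIM('a) simplex T" using sx T by blast
  note FT = facet_of_full_simplex(2)[OF sT F]
  have "T \<subseteq> closure (interior T)"
    using convex_closure_interior[OF full_simplex_props(2,4)[OF sT]] closure_subset by blast
  also have "\<dots> \<subseteq> closure (sdom Tt)"
    using T unfolding sdom_def by (intro closure_mono interior_mono) auto
  finally have F_closure: "F \<subseteq> closure (sdom Tt)" using FT by blast
  text \<open>A relative interior point of \<open>F\<close> inside \<open>\<Union>Tt\<close> would lie in a second element, and
    conformity would make \<open>F\<close> a facet of that element too.\<close>
  have "rel_interior F \<inter> interior (\<Union>Tt) = {}"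
  proof (rule ccontr)
    assume "rel_interior F \<inter> interior (\<Union>Tt) \<noteq> {}"
    then obtain z where zF: "z \<in> rel_interior F" and zU: "z \<in> interior (\<Union>Tt)" by auto
    have "F \<noteq> T" using F by auto
    then have "z \<notin> interior T"
      using face_of_disjoint_interior[OF facet_of_imp_face_of[OF F]] rel_interior_subset zF by blast
    then have "z \<in> \<Union>(Tt - {T})"
      using mem_Union_others_if_not_interior[OF fin _ zU] sx full_simplex_props(1)
      by (meson compact_imp_closed)
    then obtain T' where "T' \<in> Tt" "T' \<noteq> T" "z \<in> T'" by blast
    then have "F facet_of T'"
      using facet_of_neighbour_simplex[OF sT _ _ _ _ F zF] sx conf T by metis
    then show False using uniq \<open>T' \<in> Tt\<close> \<open>T' \<noteq> T\<close> by blast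
  qed
  moreover have "closure (rel_interior F) = F"
    using convex_closure_rel_interior[OF face_of_imp_convex[OF facet_of_imp_face_of[OF F]]]
      compact_imp_closed[OF facet_of_full_simplex(3)[OF sT F]] by simp
  ultimately have "F \<inter> interior (\<Union>Tt) = {}"
    using open_Int_closure_eq_empty[of "interior (\<Union>Tt)" "rel_interior F"] by (simp add: Int_commute)
  then show ?thesis using F_closure unfolding sbdry_def frontier_def sdom_def by auto
qed

lemma diameter_power_le_measure:
  fixes T :: "'a::euclidean_space set"
  assumes sT: "int DIM('a) simplex T" and sr: "diameter T \<le> \<sigma> * inradius T"
  shows "diameter T ^ DIM('a) \<le> (2 * \<bar>\<sigma>\<bar>) ^ DIM('a) / measure lborel (ball (0::'a) 1) * measure lebesgue T"
proof -
  let ?S = "{r. \<exists>x. ball x r \<subseteq> T}" and ?c = "measure lborel (ball (0::'a) 1)"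
  have bdd: "bdd_above ?S"
  proof (rule bdd_aboveI)
    fix r assume "r \<in> ?S"
    then obtain x where "ball x r \<subseteq> T" by auto
    then have "diameter (ball x r) \<le> diameter T"
      using compact_imp_bounded[OF full_simplex_props(1)[OF sT]] by (rule diameter_subset)
    then show "r \<le> diameter T" using diameter_full_simplex_pos[OF sT] by (auto split: if_splits)
  qed
  have "0 \<le> inradius T" unfolding inradius_def by (rule cSup_upper[OF _ bdd]) auto
  moreover have dp: "0 < diameter T" by (rule diameter_full_simplex_pos[OF sT])
  then have "0 < \<sigma> * inradius T" using sr by linarith
  ultimately have irp: "0 < inradius T" and sp: "0 < \<sigma>" by (auto simp: zero_less_mult_iff)
  have "0 \<in> ?S" by simp
  then have "?S \<noteq> {}" by blast
  moreover have "inradius T / 2 < Sup ?S" using irp by (simp add: inradius_def)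
  ultimately obtain r x where r: "inradius T / 2 < r" and x: "ball x r \<subseteq> T"
    using less_cSup_iff[OF _ bdd] by blast
  have cb: "0 < ?c" by (rule content_ball_pos) simp
  have "r ^ DIM('a) * ?c = measure lborel (ball x r)"
    using r irp by (intro content_ball_conv_unit_ball[symmetric]) simp
  also have "\<dots> = measure lebesgue (ball x r)" by simp
  also have "\<dots> \<le> measure lebesgue T"
    using x lmeasurable_compact[OF full_simplex_props(1)[OF sT]] by (intro measure_mono_fmeasurable) auto
  finally have ball_le: "r ^ DIM('a) * ?c \<le> measure lebesgue T" .
  have "diameter T \<le> (2 * \<sigma>) * r"
    using sr r sp mult_left_mono[of "inradius T" "2 * r" \<sigma>] by linarith
  then have "diameter T / (2 * \<sigma>) \<le> r"
    using sp by (simp add: divide_le_eq mult.commute)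
  then have "(diameter T / (2 * \<sigma>)) ^ DIM('a) \<le> r ^ DIM('a)"
    using dp sp by (intro power_mono) auto
  then have "(diameter T / (2 * \<sigma>)) ^ DIM('a) * ?c \<le> r ^ DIM('a) * ?c"
    using cb by (intro mult_right_mono) auto
  then have "(diameter T / (2 * \<sigma>)) ^ DIM('a) * ?c \<le> measure lebesgue T"
    using ball_le by linarith
  then show ?thesis using sp cb by (simp add: field_simps power_divide)
qed

text \<open>The sum is the Gram determinant of \<open>v 0, \<dots>, v (m - 1)\<close>; for one or two vectors
  Hadamard's inequality reduces to Cauchy-Schwarz.\<close>
lemma gram_det_bounds:
  fixes v :: "nat \<Rightarrow> 'a::real_inner"
  assumes m: "m = 1 \<or> m = 2" and nv: "\<forall>i<m. norm (v i) \<le> h"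
  shows "0 \<le> (\<Sum>\<pi> | \<pi> permutes {..<m}. of_int (sign \<pi>) * (\<Prod>i<m. v i \<bullet> v (\<pi> i)))"
    and "(\<Sum>\<pi> | \<pi> permutes {..<m}. of_int (sign \<pi>) * (\<Prod>i<m. v i \<bullet> v (\<pi> i))) \<le> (h ^ m)\<^sup>2"
proof -
  let ?X = "\<Sum>\<pi> | \<pi> permutes {..<m}. of_int (sign \<pi>) * (\<Prod>i<m. v i \<bullet> v (\<pi> i))"
  have "0 \<le> ?X \<and> ?X \<le> (h ^ m)\<^sup>2"
  proof (cases "m = 1")
    case True
    have "{..<m} = {0}" using True by auto
    then have "?X = (norm (v 0))\<^sup>2"
      using True by (simp add: sum_over_permutations_insert power2_norm_eq_inner)
    then show ?thesis using nv True by (simp add: power_mono)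
  next
    case False
    then have m2: "m = 2" using m by auto
    have "{..<m} = {1, 0}" using m2 by auto
    then have "?X = (v 0 \<bullet> v 0) * (v 1 \<bullet> v 1) - (v 0 \<bullet> v 1)\<^sup>2"
      using m2 by (simp add: sum_over_permutations_insert sign_compose sign_swap_id
          power2_eq_square inner_commute)
    then have X: "?X = (norm (v 0))\<^sup>2 * (norm (v 1))\<^sup>2 - (v 0 \<bullet> v 1)\<^sup>2"
      by (simp only: power2_norm_eq_inner)
    have cs: "(v 0 \<bullet> v 1)\<^sup>2 \<le> (norm (v 0))\<^sup>2 * (norm (v 1))\<^sup>2"
      using Cauchy_Schwarz_ineq2[of "v 0" "v 1"]
      by (metis abs_ge_zero power2_abs power_mono power_mult_distrib)
    have "norm (v 0) \<le> h" "norm (v 1) \<le> h" using nv m2 by auto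
    then have "(norm (v 0))\<^sup>2 * (norm (v 1))\<^sup>2 \<le> h\<^sup>2 * h\<^sup>2" by (intro mult_mono power_mono) auto
    moreover have "h\<^sup>2 * h\<^sup>2 = (h ^ m)\<^sup>2" using m2 by (simp add: power2_eq_square)
    moreover have "0 \<le> (v 0 \<bullet> v 1)\<^sup>2" by simp
    ultimately show ?thesis unfolding X using cs by linarith
  qed
  then show "0 \<le> ?X" "?X \<le> (h ^ m)\<^sup>2" by auto
qed

text \<open>Nonnegativity is not automatic: \<^const>\<open>sqrt\<close> is odd on negative reals.\<close>
lemma facet_jacobian_bounds:
  fixes T :: "'a::euclidean_space set"
  assumes dim: "DIM('a) = 2 \<or> DIM('a) = 3" and sT: "int DIM('a) simplex T" and F: "F facet_of T"
  shows "0 \<le> facet_jacobian F" "facet_jacobian F \<le> diameter T ^ (DIM('a) - 1)"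
proof -
  let ?p = "facet_vertices F"
  have m: "DIM('a) - 1 = 1 \<or> DIM('a) - 1 = 2" using dim by auto
  have nv: "norm (?p (Suc i) - ?p 0) \<le> diameter T" if "i < DIM('a) - 1" for i
  proof -
    have "?p j \<in> F" if "j < DIM('a)" for j
      using that by (subst facet_of_full_simplex(1)[OF sT F]) (auto intro: hull_inc)
    then have "?p (Suc i) \<in> T" "?p 0 \<in> T"
      using \<open>i < DIM('a) - 1\<close> facet_of_full_simplex(2)[OF sT F] by auto
    then show ?thesis
      using diameter_bounded_bound[OF compact_imp_bounded[OF full_simplex_props(1)[OF sT]]]
      by (simp add: dist_norm norm_minus_commute)
  qed
  then have "facet_jacobian F \<le> sqrt ((diameter T ^ (DIM('a) - 1))\<^sup>2)"
    unfolding facet_jacobian_def by (intro real_sqrt_le_mono gram_det_bounds(2)[OF m]) auto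
  then show "facet_jacobian F \<le> diameter T ^ (DIM('a) - 1)"
    using diameter_full_simplex_pos[OF sT] by simp
  show "0 \<le> facet_jacobian F"
    unfolding facet_jacobian_def using nv by (intro real_sqrt_ge_zero gram_det_bounds(1)[OF m]) auto
qed

text \<open>A function of \<open>V\<^sub>h\<close> is affine on each element but arbitrary elsewhere, so integrands on
  a facet are only required to agree there with a bounded Borel function.\<close>
definition bounded_borel_on :: "'a::euclidean_space set \<Rightarrow> ('a \<Rightarrow> real) \<Rightarrow> bool" where
  "bounded_borel_on F f \<longleftrightarrow>
     (\<exists>g \<in> borel_measurable borel. (\<forall>x\<in>F. f x = g x) \<and> (\<exists>B. \<forall>x\<in>F. \<bar>g x\<bar> \<le> B))"

lemma bounded_borel_on_cong:
  "(\<And>x. x \<in> F \<Longrightarrow> f x = g x) \<Longrightarrow> bounded_borel_on F f = bounded_borel_on F g"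
  unfolding bounded_borel_on_def by simp

lemma bounded_borel_on_const: "bounded_borel_on F (\<lambda>x. c)"
  unfolding bounded_borel_on_def by (intro bexI[of _ "\<lambda>x. c"]) auto

lemma bounded_borel_on_add:
  assumes "bounded_borel_on F f" "bounded_borel_on F g"
  shows "bounded_borel_on F (\<lambda>x. f x + g x)"
proof -
  obtain f' B1 g' B2 where "f' \<in> borel_measurable borel" "\<forall>x\<in>F. f x = f' x" "\<forall>x\<in>F. \<bar>f' x\<bar> \<le> B1"
    "g' \<in> borel_measurable borel" "\<forall>x\<in>F. g x = g' x" "\<forall>x\<in>F. \<bar>g' x\<bar> \<le> B2"
    using assms unfolding bounded_borel_on_def by metis
  then show ?thesis unfolding bounded_borel_on_def
    by (intro bexI[of _ "\<lambda>x. f' x + g' x"] conjI exI[of _ "B1 + B2"])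
      (auto intro!: abs_triangle_ineq[THEN order_trans] add_mono)
qed

lemma bounded_borel_on_mult:
  assumes "bounded_borel_on F f" "bounded_borel_on F g"
  shows "bounded_borel_on F (\<lambda>x. f x * g x)"
proof -
  obtain f' B1 g' B2 where "f' \<in> borel_measurable borel" "\<forall>x\<in>F. f x = f' x" "\<forall>x\<in>F. \<bar>f' x\<bar> \<le> B1"
    "g' \<in> borel_measurable borel" "\<forall>x\<in>F. g x = g' x" "\<forall>x\<in>F. \<bar>g' x\<bar> \<le> B2"
    using assms unfolding bounded_borel_on_def by metis
  then show ?thesis unfolding bounded_borel_on_def
    by (intro bexI[of _ "\<lambda>x. f' x * g' x"] conjI exI[of _ "B1 * B2"])
      (auto simp: abs_mult intro!: mult_mono)
qed

lemma bounded_borel_on_diff: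
  assumes "bounded_borel_on F f" "bounded_borel_on F g"
  shows "bounded_borel_on F (\<lambda>x. f x - g x)"
  using bounded_borel_on_add[OF assms(1) bounded_borel_on_mult[OF bounded_borel_on_const assms(2)],
      of "-1"] by simp

lemma integrable_facet_integrand:
  fixes T :: "'a::euclidean_space set"
  assumes sT: "int DIM('a) simplex T" and F: "F facet_of T" and f: "bounded_borel_on F f"
  shows "integrable (param_space (DIM('a)-1))
           (\<lambda>t. indicator (std_simplex (DIM('a)-1)) t * f (facet_param F t) * facet_jacobian F)"
proof -
  let ?m = "DIM('a) - 1" and ?J = "facet_jacobian F"
  obtain g B where g: "g \<in> borel_measurable borel" "\<forall>x\<in>F. f x = g x" "\<forall>x\<in>F. \<bar>g x\<bar> \<le> B"
    using f unfolding bounded_borel_on_def by metis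
  let ?h = "\<lambda>t. indicator (std_simplex ?m) t * g (facet_param F t) * ?J"
  have "integrable (param_space ?m) ?h"
  proof (rule Bochner_Integration.integrable_bound[OF integrable_unit_cube[of _ "B * ?J"]])
    show "?h \<in> borel_measurable (param_space ?m)" using g(1) by measurable
    have "norm (?h t) \<le> norm (indicator (unit_cube ?m) t * (B * ?J))"
      if t: "t \<in> space (param_space ?m)" for t
    proof (cases "t \<in> std_simplex ?m")
      case True
      then have "t \<in> unit_cube ?m" "\<bar>g (facet_param F t)\<bar> \<le> B"
        using std_simplex_subset_unit_cube t g(3) facet_param_mem[OF sT F] by blast+
      then show ?thesis using True by (auto simp: abs_mult facet_jacobian_def intro!: mult_right_mono)
    qed simp
    then show "AE t in param_space ?m. norm (?h t) \<le> norm (indicator (unit_cube ?m) t * (B * ?J))"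
      by (rule AE_I2)
  qed
  moreover have "(\<lambda>t. indicator (std_simplex ?m) t * f (facet_param F t) * ?J) = ?h"
    using g(2) facet_param_mem[OF sT F] by (auto simp: fun_eq_iff indicator_def)
  ultimately show ?thesis by simp
qed

lemma facet_integral_add:
  fixes T :: "'a::euclidean_space set"
  assumes "int DIM('a) simplex T" "F facet_of T" "bounded_borel_on F f" "bounded_borel_on F g"
  shows "facet_integral F (\<lambda>x. f x + g x) = facet_integral F f + facet_integral F g"
  using integrable_facet_integrand[OF assms(1,2,3)] integrable_facet_integrand[OF assms(1,2,4)]
  by (simp add: facet_integral_param distrib_left distrib_right)

lemma facet_integral_diff:
  fixes T :: "'a::euclidean_space set"
  assumes "int DIM('a) simplex T" "F facet_of T" "bounded_borel_on F f" "bounded_borel_on F g"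
  shows "facet_integral F (\<lambda>x. f x - g x) = facet_integral F f - facet_integral F g"
  using integrable_facet_integrand[OF assms(1,2,3)] integrable_facet_integrand[OF assms(1,2,4)]
  by (simp add: facet_integral_param right_diff_distrib left_diff_distrib)

lemma facet_integral_cmult: "facet_integral F (\<lambda>x. c * f x) = c * facet_integral F f"
proof -
  have "(\<lambda>t. indicator (std_simplex m) t * (c * f (facet_param F t)) * facet_jacobian F)
          = (\<lambda>t. c * (indicator (std_simplex m) t * f (facet_param F t) * facet_jacobian F))" for m
    by (simp add: fun_eq_iff algebra_simps)
  then show ?thesis by (simp add: facet_integral_param)
qed

text \<open>The standard simplex lies in the unit cube of measure 1, so no simplex volume is needed.\<close>
lemma facet_integral_ge_const:
  fixes T :: "'a::euclidean_space set"
  assumes dim: "DIM('a) = 2 \<or> DIM('a) = 3" and sT: "int DIM('a) simplex T" and F: "F facet_of T"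
    and f: "bounded_borel_on F f" and L: "L \<le> 0" "\<forall>x\<in>F. L \<le> f x"
  shows "L * diameter T ^ (DIM('a) - 1) \<le> facet_integral F f"
proof -
  let ?m = "DIM('a) - 1" and ?J = "facet_jacobian F"
  note J = facet_jacobian_bounds[OF dim sT F]
  have "L * diameter T ^ ?m \<le> L * ?J"
    using J(2) L(1) by (rule mult_left_mono_neg)
  also have "\<dots> = (\<integral>t. indicator (unit_cube ?m) t * (L * ?J) \<partial>param_space ?m)"
    using measure_unit_cube unit_cube_sets[THEN sets.sets_into_space] by (simp add: Int_absorb2)
  also have "\<dots> \<le> facet_integral F f"
    unfolding facet_integral_param
  proof (rule integral_mono[OF integrable_unit_cube integrable_facet_integrand[OF sT F f]])
    fix t assume t: "t \<in> space (param_space ?m)"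
    show "indicator (unit_cube ?m) t * (L * ?J)
            \<le> indicator (std_simplex ?m) t * f (facet_param F t) * ?J"
    proof (cases "t \<in> std_simplex ?m")
      case True
      then show ?thesis
        using std_simplex_subset_unit_cube[OF t] L(2) facet_param_mem[OF sT F] J(1)
        by (auto intro!: mult_right_mono)
    qed (use L(1) J(1) in \<open>auto simp: indicator_def mult_nonpos_nonneg\<close>)
  qed
  finally show ?thesis .
qed

lemma nitsche_integrand_ge:
  fixes a s e h \<epsilon> \<eta> G \<alpha> C :: real
  assumes h: "h > 0" and \<epsilon>: "\<epsilon> > 0" and a: "\<bar>a\<bar> \<le> G" and e: "\<bar>e\<bar> \<le> G * \<eta> * h"
    and \<alpha>: "\<alpha> - C \<ge> 1 / \<epsilon>"
  shows "- (a * s) - s * a + \<alpha> / h * s * s + a * e - C * (s\<^sup>2 / h) \<ge> - ((\<epsilon> + \<eta>) * h * G\<^sup>2)"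
proof -
  have "0 \<le> (\<epsilon> * h * a - s)\<^sup>2 / (\<epsilon> * h)" using h \<epsilon> by simp
  also have "\<dots> = \<epsilon> * h * a\<^sup>2 - 2 * a * s + s\<^sup>2 / (\<epsilon> * h)"
    using h \<epsilon> by (simp add: field_simps power2_eq_square)
  finally have young: "2 * a * s \<le> \<epsilon> * h * a\<^sup>2 + s\<^sup>2 / (\<epsilon> * h)" by simp
  have "a\<^sup>2 \<le> G\<^sup>2" using a by (metis abs_ge_zero power2_abs power_mono)
  then have "\<epsilon> * h * a\<^sup>2 \<le> \<epsilon> * h * G\<^sup>2" using h \<epsilon> by simp
  moreover have "s\<^sup>2 / (\<epsilon> * h) \<le> (\<alpha> - C) * (s\<^sup>2 / h)"
    using \<alpha> h \<epsilon> mult_right_mono[OF \<alpha>, of "s\<^sup>2 / h"] by (simp add: field_simps)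
  moreover have "\<bar>a * e\<bar> \<le> G * (G * \<eta> * h)"
    unfolding abs_mult using a e by (intro mult_mono) auto
  then have "- (\<eta> * h * G\<^sup>2) \<le> a * e" by (simp add: abs_le_iff power2_eq_square mult_ac)
  moreover have "\<alpha> / h * s * s = \<alpha> * (s\<^sup>2 / h)" by (simp add: power2_eq_square)
  moreover have "(\<alpha> - C) * (s\<^sup>2 / h) = \<alpha> * (s\<^sup>2 / h) - C * (s\<^sup>2 / h)" by (rule left_diff_distrib)
  moreover have "s * a = a * s" "2 * a * s = a * s + a * s" by simp_all
  moreover have "(\<epsilon> + \<eta>) * h * G\<^sup>2 = \<epsilon> * h * G\<^sup>2 + \<eta> * h * G\<^sup>2" by (simp add: algebra_simps)
  ultimately show ?thesis using young by linarith
qed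

text \<open>The contribution of one boundary facet to \<open>a\<^sub>h(u, u) - C \<parallel>u\<parallel>\<^sub>a\<^sup>2\<close>.\<close>
definition nitsche_facet_terms ::
  "real \<Rightarrow> real \<Rightarrow> ('a::euclidean_space \<Rightarrow> 'a) \<Rightarrow> ('a \<Rightarrow> real) \<Rightarrow> 'a set \<Rightarrow> 'a set \<Rightarrow> real" where
  "nitsche_facet_terms \<alpha> C M u T F =
     - facet_integral F (\<lambda>x. (gradT T u \<bullet> outer_normal T F) * Sh M u T x)
     - facet_integral F (\<lambda>x. Sh M u T x * (gradT T u \<bullet> outer_normal T F))
     + facet_integral F (\<lambda>x. \<alpha> / diameter T * Sh M u T x * Sh M u T x)
     + facet_integral F (\<lambda>x. (gradT T u \<bullet> outer_normal T F) * (gradT T u \<bullet> (M x - x)))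
     - C * facet_integral F (\<lambda>x. (Sh M u T x)\<^sup>2 / diameter T)"

lemma bounded_borel_on_Sh:
  fixes T :: "'a::euclidean_space set"
  assumes sT: "int DIM('a) simplex T" and F: "F facet_of T" and M: "M \<in> borel_measurable borel"
    and disp: "\<forall>x\<in>F. norm (M x - x) \<le> B" and u: "\<forall>x\<in>T. u x = gradT T u \<bullet> x + c"
  shows "bounded_borel_on F (\<lambda>x. gradT T u \<bullet> (M x - x))" "bounded_borel_on F (Sh M u T)"
proof -
  let ?g = "gradT T u"
  have "\<bar>?g \<bullet> (M x - x)\<bar> \<le> norm ?g * B" if "x \<in> F" for x
    using Cauchy_Schwarz_ineq2[of ?g "M x - x"] disp that mult_left_mono[of _ B "norm ?g"]
    by fastforce
  then show bD: "bounded_borel_on F (\<lambda>x. ?g \<bullet> (M x - x))"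
    unfolding bounded_borel_on_def using M by (intro bexI[of _ "\<lambda>x. ?g \<bullet> (M x - x)"]) auto
  obtain R where R: "\<forall>x\<in>F. norm x \<le> R"
    using compact_imp_bounded[OF facet_of_full_simplex(3)[OF sT F]] by (auto simp: bounded_iff)
  have "\<bar>?g \<bullet> x + c\<bar> \<le> norm ?g * R + \<bar>c\<bar>" if "x \<in> F" for x
    using Cauchy_Schwarz_ineq2[of ?g x] R that mult_left_mono[of "norm x" R "norm ?g"] by fastforce
  then have "bounded_borel_on F (\<lambda>x. ?g \<bullet> x + c)"
    unfolding bounded_borel_on_def by (intro bexI[of _ "\<lambda>x. ?g \<bullet> x + c"]) auto
  then have "bounded_borel_on F (\<lambda>x. (?g \<bullet> x + c) + ?g \<bullet> (M x - x))"
    using bD by (rule bounded_borel_on_add)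
  moreover have "Sh M u T x = (?g \<bullet> x + c) + ?g \<bullet> (M x - x)" if "x \<in> F" for x
    using u facet_of_full_simplex(2)[OF sT F] that by (auto simp: Sh_def)
  ultimately show "bounded_borel_on F (Sh M u T)" by (subst bounded_borel_on_cong) auto
qed

lemma nitsche_facet_terms_eq_integral:
  fixes T F :: "'a::euclidean_space set" and M :: "'a \<Rightarrow> 'a" and u :: "'a \<Rightarrow> real"
    and \<alpha> C :: real
  defines "a \<equiv> gradT T u \<bullet> outer_normal T F" and "S \<equiv> Sh M u T" and "h \<equiv> diameter T"
  defines "\<Phi> \<equiv> \<lambda>x. \<alpha> / h * S x * S x + a * (gradT T u \<bullet> (M x - x)) - a * S x - S x * a
                   - C * ((S x)\<^sup>2 / h)"
  assumes sT: "int DIM('a) simplex T" and F: "F facet_of T"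
    and bD: "bounded_borel_on F (\<lambda>x. gradT T u \<bullet> (M x - x))" and bS: "bounded_borel_on F S"
  shows "nitsche_facet_terms \<alpha> C M u T F = facet_integral F \<Phi>" "bounded_borel_on F \<Phi>"
proof -
  define f1 where "f1 = (\<lambda>x. a * S x)"
  define f2 where "f2 = (\<lambda>x. S x * a)"
  define f3 where "f3 = (\<lambda>x. \<alpha> / h * S x * S x)"
  define f4 where "f4 = (\<lambda>x. a * (gradT T u \<bullet> (M x - x)))"
  define f5 where "f5 = (\<lambda>x. (S x)\<^sup>2 / h)"
  have bf: "bounded_borel_on F f1" "bounded_borel_on F f2" "bounded_borel_on F f3"
    "bounded_borel_on F f4" "bounded_borel_on F f5"
    using bS bD unfolding f1_def f2_def f3_def f4_def f5_def power2_eq_square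
    by (auto simp only: divide_inverse bounded_borel_on_mult bounded_borel_on_const)
  have \<Phi>: "\<Phi> = (\<lambda>x. f3 x + f4 x - f1 x - f2 x - C * f5 x)"
    by (simp add: \<Phi>_def f1_def f2_def f3_def f4_def f5_def)
  show "bounded_borel_on F \<Phi>" unfolding \<Phi>
    by (simp add: bounded_borel_on_add bounded_borel_on_diff bounded_borel_on_mult
        bounded_borel_on_const bf)
  show "nitsche_facet_terms \<alpha> C M u T F = facet_integral F \<Phi>"
    unfolding \<Phi> nitsche_facet_terms_def a_def[symmetric] S_def[symmetric] h_def[symmetric]
      f1_def[symmetric] f2_def[symmetric] f3_def[symmetric] f4_def[symmetric] f5_def[symmetric]
    by (simp add: facet_integral_add[OF sT F] facet_integral_diff[OF sT F] facet_integral_cmult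
        bounded_borel_on_add bounded_borel_on_diff bounded_borel_on_mult bounded_borel_on_const bf)
qed

lemma nitsche_facet_terms_ge:
  fixes T :: "'a::euclidean_space set"
  assumes dim: "DIM('a) = 2 \<or> DIM('a) = 3" and sT: "int DIM('a) simplex T" and F: "F facet_of T"
    and M: "M \<in> borel_measurable borel" and disp: "\<forall>x\<in>F. norm (M x - x) \<le> \<eta> * diameter T"
    and u: "\<forall>x\<in>T. u x = gradT T u \<bullet> x + c"
    and \<eta>: "\<eta> \<ge> 0" and \<epsilon>: "\<epsilon> > 0" and \<alpha>: "\<alpha> - C \<ge> 1 / \<epsilon>"
  shows "nitsche_facet_terms \<alpha> C M u T F \<ge> - ((\<epsilon> + \<eta>) * (norm (gradT T u))\<^sup>2 * diameter T ^ DIM('a))"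
proof -
  let ?g = "gradT T u" and ?h = "diameter T"
  let ?L = "- ((\<epsilon> + \<eta>) * ?h * (norm ?g)\<^sup>2)"
  have h: "?h > 0" by (rule diameter_full_simplex_pos[OF sT])
  have a: "\<bar>?g \<bullet> outer_normal T F\<bar> \<le> norm ?g"
    using Cauchy_Schwarz_ineq2[of ?g "outer_normal T F"] norm_outer_normal[OF sT F] by simp
  have shift: "\<bar>?g \<bullet> (M x - x)\<bar> \<le> norm ?g * \<eta> * ?h" if "x \<in> F" for x
    using Cauchy_Schwarz_ineq2[of ?g "M x - x"] disp that mult_left_mono[of _ _ "norm ?g"]
    by (fastforce simp: mult.assoc)
  note \<Phi> = nitsche_facet_terms_eq_integral[OF sT F bounded_borel_on_Sh[OF sT F M disp u],
      of \<alpha> C]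
  have "?L * ?h ^ (DIM('a) - 1) \<le> nitsche_facet_terms \<alpha> C M u T F"
    unfolding \<Phi>(1)
  proof (rule facet_integral_ge_const[OF dim sT F \<Phi>(2)])
    show "?L \<le> 0" using \<epsilon> \<eta> h by simp
    show "\<forall>x\<in>F. ?L \<le> \<alpha> / ?h * Sh M u T x * Sh M u T x + (?g \<bullet> outer_normal T F) * (?g \<bullet> (M x - x))
        - (?g \<bullet> outer_normal T F) * Sh M u T x - Sh M u T x * (?g \<bullet> outer_normal T F)
        - C * ((Sh M u T x)\<^sup>2 / ?h)"
    proof
      fix x assume "x \<in> F"
      from nitsche_integrand_ge[where s = "Sh M u T x", OF h \<epsilon> a shift[OF this] \<alpha>]
      show "?L \<le> \<alpha> / ?h * Sh M u T x * Sh M u T x + (?g \<bullet> outer_normal T F) * (?g \<bullet> (M x - x))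
        - (?g \<bullet> outer_normal T F) * Sh M u T x - Sh M u T x * (?g \<bullet> outer_normal T F)
        - C * ((Sh M u T x)\<^sup>2 / ?h)" by linarith
    qed
  qed
  moreover have "?h ^ DIM('a) = ?h * ?h ^ (DIM('a) - 1)"
    by (subst power_Suc[symmetric]) simp
  ultimately show ?thesis by (simp add: algebra_simps)
qed

definition dirichlet_energy :: "'a::euclidean_space set set \<Rightarrow> ('a \<Rightarrow> real) \<Rightarrow> real" where
  "dirichlet_energy Tt u = (\<Sum>T\<in>Tt. (norm (gradT T u))\<^sup>2 * measure lebesgue T)"

lemma Vh_affine_on_element:
  assumes "u \<in> Vh Tt" "T \<in> Tt"
  shows "\<exists>c. \<forall>x\<in>T. u x = gradT T u \<bullet> x + c"
proof -
  have "\<exists>a c. \<forall>x\<in>T. u x = a \<bullet> x + c" using assms by (auto simp: Vh_def)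
  then show ?thesis unfolding gradT_def by (rule someI_ex)
qed

lemma ah_minus_norm_a_sq_eq:
  fixes Tt :: "'a::euclidean_space set set"
  assumes "\<forall>T\<in>Tt. int DIM('a) simplex T"
  shows "ah \<alpha> Tt M u u - C * norm_a_sq Tt M u
           = (1 - C) * dirichlet_energy Tt u
             + (\<Sum>(T, F)\<in>bdry_facets Tt. nitsche_facet_terms \<alpha> C M u T F)"
proof -
  have "set_lebesgue_integral lebesgue T (\<lambda>x. k) = k * measure lebesgue T" if "T \<in> Tt" for T k
  proof -
    have "T \<in> lmeasurable"
      using lmeasurable_compact full_simplex_props(1) assms that by blast
    then have "T \<in> sets lebesgue" "emeasure lebesgue T \<noteq> \<infinity>" by (auto simp: fmeasurable_def)
    then show ?thesis by (simp add: set_integral_const mult.commute)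
  qed
  then have "(\<Sum>T\<in>Tt. set_lebesgue_integral lebesgue T (\<lambda>x. gradT T u \<bullet> gradT T u))
               = dirichlet_energy Tt u"
    "(\<Sum>T\<in>Tt. set_lebesgue_integral lebesgue T (\<lambda>x. (norm (gradT T u))\<^sup>2))
               = dirichlet_energy Tt u"
    by (simp_all add: dirichlet_energy_def power2_norm_eq_inner cong: sum.cong)
  then show ?thesis
    unfolding ah_def norm_a_sq_def bdry_int_def nitsche_facet_terms_def
    by (simp add: sum.distrib sum_subtractf sum_distrib_left sum_negf split_def algebra_simps)
qed

lemma sum_bdry_facets_le:
  fixes Tt :: "'a::euclidean_space set set"
  assumes fin: "finite Tt" and sx: "\<forall>T\<in>Tt. int DIM('a) simplex T" and w: "\<forall>T\<in>Tt. 0 \<le> w T"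
  shows "(\<Sum>(T, F)\<in>bdry_facets Tt. w T) \<le> real (Suc DIM('a)) * (\<Sum>T\<in>Tt. w T)"
proof -
  let ?facets = "Sigma Tt (\<lambda>T. {F. F facet_of T})"
  have fin_facets: "finite ?facets"
    using fin sx card_facets_full_simplex(1) by (intro finite_SigmaI) auto
  have "(\<Sum>(T, F)\<in>bdry_facets Tt. w T) \<le> (\<Sum>(T, F)\<in>?facets. w T)"
    using fin_facets w by (intro sum_mono2) (auto simp: bdry_facets_def)
  also have "\<dots> = (\<Sum>T\<in>Tt. \<Sum>F\<in>{F. F facet_of T}. w T)"
    using fin sx card_facets_full_simplex(1) by (subst sum.Sigma) auto
  also have "\<dots> = (\<Sum>T\<in>Tt. real (card {F. F facet_of T}) * w T)" by simp
  also have "\<dots> \<le> (\<Sum>T\<in>Tt. real (Suc DIM('a)) * w T)"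
  proof (intro sum_mono mult_right_mono)
    fix T assume "T \<in> Tt"
    then show "real (card {F. F facet_of T}) \<le> real (Suc DIM('a))" "0 \<le> w T"
      using sx w card_facets_full_simplex(2)[of T] by auto
  qed
  finally show ?thesis by (simp add: sum_distrib_left)
qed

lemma nitsche_bdry_facet_ge:
  fixes Tt :: "'a::euclidean_space set set" and \<sigma> :: real
  defines "K \<equiv> (2 * \<bar>\<sigma>\<bar>) ^ DIM('a) / measure lborel (ball (0::'a) 1)"
  assumes dim: "DIM('a) = 2 \<or> DIM('a) = 3"
    and fin: "finite Tt" and sx: "\<forall>T\<in>Tt. int DIM('a) simplex T"
    and conf: "\<forall>T1\<in>Tt. \<forall>T2\<in>Tt. (T1 \<inter> T2) face_of T1 \<and> (T1 \<inter> T2) face_of T2"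
    and sr: "\<forall>T\<in>Tt. diameter T \<le> \<sigma> * inradius T"
    and u: "u \<in> Vh Tt" and M: "M \<in> borel_measurable borel"
    and disp: "\<forall>T\<in>Tt. \<forall>x\<in>sbdry Tt \<inter> T. norm (M x - x) \<le> \<eta> * diameter T"
    and \<eta>: "\<eta> \<ge> 0" and \<epsilon>: "\<epsilon> > 0" and \<alpha>: "\<alpha> - C \<ge> 1 / \<epsilon>"
    and TF: "(T, F) \<in> bdry_facets Tt"
  shows "nitsche_facet_terms \<alpha> C M u T F
           \<ge> - ((\<epsilon> + \<eta>) * K * ((norm (gradT T u))\<^sup>2 * measure lebesgue T))"
proof -
  let ?G = "(\<epsilon> + \<eta>) * (norm (gradT T u))\<^sup>2"
  have T: "T \<in> Tt" and F: "F facet_of T" using TF by (auto simp: bdry_facets_def)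
  have sT: "int DIM('a) simplex T" using sx T by blast
  have "F \<subseteq> sbdry Tt \<inter> T"
    using bdry_facet_subset_sbdry[OF fin sx conf TF] facet_of_full_simplex(2)[OF sT F] by blast
  then have "\<forall>x\<in>F. norm (M x - x) \<le> \<eta> * diameter T" using disp T by blast
  moreover obtain c where "\<forall>x\<in>T. u x = gradT T u \<bullet> x + c" using Vh_affine_on_element[OF u T] by blast
  ultimately have "- (?G * diameter T ^ DIM('a)) \<le> nitsche_facet_terms \<alpha> C M u T F"
    using nitsche_facet_terms_ge[OF dim sT F M] \<eta> \<epsilon> \<alpha> by blast
  moreover have "diameter T ^ DIM('a) \<le> K * measure lebesgue T"
    using diameter_power_le_measure[OF sT] sr T by (simp add: K_def)
  then have "?G * diameter T ^ DIM('a) \<le> ?G * (K * measure lebesgue T)"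
    using \<epsilon> \<eta> by (intro mult_left_mono) auto
  ultimately show ?thesis by (simp add: mult_ac)
qed

lemma ah_coercive_on_mesh:
  fixes Tt :: "'a::euclidean_space set set" and \<sigma> :: real
  defines "K \<equiv> (2 * \<bar>\<sigma>\<bar>) ^ DIM('a) / measure lborel (ball (0::'a) 1)"
  assumes dim: "DIM('a) = 2 \<or> DIM('a) = 3"
    and fin: "finite Tt" and sx: "\<forall>T\<in>Tt. int DIM('a) simplex T"
    and conf: "\<forall>T1\<in>Tt. \<forall>T2\<in>Tt. (T1 \<inter> T2) face_of T1 \<and> (T1 \<inter> T2) face_of T2"
    and sr: "\<forall>T\<in>Tt. diameter T \<le> \<sigma> * inradius T"
    and u: "u \<in> Vh Tt" and M: "M \<in> borel_measurable borel"
    and disp: "\<forall>T\<in>Tt. \<forall>x\<in>sbdry Tt \<inter> T. norm (M x - x) \<le> \<eta> * diameter T"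
    and \<eta>: "\<eta> \<ge> 0" and \<epsilon>: "\<epsilon> > 0" and \<alpha>: "\<alpha> - C \<ge> 1 / \<epsilon>"
  shows "ah \<alpha> Tt M u u - C * norm_a_sq Tt M u
           \<ge> (1 - C - (\<epsilon> + \<eta>) * K * real (Suc DIM('a))) * dirichlet_energy Tt u"
proof -
  define w where "w T = (norm (gradT T u))\<^sup>2 * measure lebesgue T" for T
  have w: "\<forall>T\<in>Tt. 0 \<le> w T" by (simp add: w_def)
  have K: "0 \<le> K" unfolding K_def by simp
  have "- ((\<epsilon> + \<eta>) * K * real (Suc DIM('a)) * dirichlet_energy Tt u)
          \<le> - ((\<epsilon> + \<eta>) * K * (\<Sum>(T, F)\<in>bdry_facets Tt. w T))"
    using sum_bdry_facets_le[OF fin sx w] \<epsilon> \<eta> K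
    by (simp add: dirichlet_energy_def w_def[symmetric] mult_left_mono mult.assoc)
  also have "\<dots> \<le> (\<Sum>(T, F)\<in>bdry_facets Tt. nitsche_facet_terms \<alpha> C M u T F)"
    using nitsche_bdry_facet_ge[OF dim fin sx conf sr u M disp \<eta> \<epsilon> \<alpha>]
    by (simp add: K_def w_def sum_distrib_left sum_negf[symmetric] split_def sum_mono)
  finally show ?thesis
    unfolding ah_minus_norm_a_sq_eq[OF sx] by (simp add: algebra_simps)
qed

lemma displacement_le_of_hatGamma:
  fixes Tt :: "'a::euclidean_space set set"
  assumes fin: "finite Tt" and sx: "\<forall>T\<in>Tt. int DIM('a) simplex T"
    and hG: "hatGamma Tt \<le> \<delta>" and cd: "c_d \<ge> 0" and \<zeta>: "\<zeta> > 0"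
    and disp: "\<forall>T\<in>Tt. \<forall>x\<in>sbdry Tt \<inter> T. norm (M x - x) \<le> c_d * diameter T * hat_h Tt T powr \<zeta>"
  shows "\<forall>T\<in>Tt. \<forall>x\<in>sbdry Tt \<inter> T. norm (M x - x) \<le> c_d * \<delta> powr \<zeta> * diameter T"
proof (intro ballI)
  fix T x assume T: "T \<in> Tt" and x: "x \<in> sbdry Tt \<inter> T"
  have d: "0 < diameter T" using sx T diameter_full_simplex_pos by blast
  have "diameter T \<le> hGamma Tt"
    unfolding hGamma_def using fin T x by (intro Max_ge) auto
  then have "hat_h Tt T \<le> hatGamma Tt"
    unfolding hat_h_def hatGamma_def by (simp add: divide_right_mono lsize_def)
  then have "hat_h Tt T powr \<zeta> \<le> \<delta> powr \<zeta>"
    using hG \<zeta> d by (intro powr_mono2) (auto simp: hat_h_def lsize_def)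
  then have "c_d * diameter T * hat_h Tt T powr \<zeta> \<le> c_d * diameter T * \<delta> powr \<zeta>"
    using cd d by (intro mult_left_mono) auto
  moreover have "c_d * diameter T * \<delta> powr \<zeta> = c_d * \<delta> powr \<zeta> * diameter T" by (simp add: mult_ac)
  moreover have "norm (M x - x) \<le> c_d * diameter T * hat_h Tt T powr \<zeta>" using disp T x by blast
  ultimately show "norm (M x - x) \<le> c_d * \<delta> powr \<zeta> * diameter T" by linarith
qed

lemma admissible_triangulation_tildeT:
  fixes Th :: "'a::euclidean_space set set"
  assumes "admissible_triangulation Th D"
  shows "finite (tildeT Th \<Omega>)" "\<forall>T\<in>tildeT Th \<Omega>. int DIM('a) simplex T"
    "\<forall>T1\<in>tildeT Th \<Omega>. \<forall>T2\<in>tildeT Th \<Omega>. (T1 \<inter> T2) face_of T1 \<and> (T1 \<inter> T2) face_of T2"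
  using assms by (auto simp: admissible_triangulation_def tildeT_def)

theorem theorem2:
  fixes \<Omega> D :: "'a::euclidean_space set" and \<sigma> c_d \<zeta> :: real
  assumes "DIM('a) = 2 \<or> DIM('a) = 3"
    and "open \<Omega>" and "connected \<Omega>" and "bounded \<Omega>" and "\<Omega> \<noteq> {}"
    and "lipschitz_boundary \<Omega>"
    and "closed D" and "D = closure (interior D)" and "connected (interior D)"
    and "closure \<Omega> \<subseteq> D"
    and "c_d > 0" and "\<zeta> > 0"
  shows "\<exists>\<alpha>0 \<delta>. \<delta> > 0 \<and> (\<forall>\<alpha>. \<alpha> > 0 \<and> \<alpha> \<ge> \<alpha>0 \<longrightarrow> (\<exists>C_a > 0.
           \<forall>Th M u. admissible_triangulation Th D \<and> shape_regular \<sigma> Th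
             \<and> hatGamma (tildeT Th \<Omega>) \<le> \<delta>
             \<and> M \<in> borel_measurable borel
             \<and> (\<forall>x\<in>sbdry (tildeT Th \<Omega>). M x \<in> frontier \<Omega>)
             \<and> (\<forall>T\<in>tildeT Th \<Omega>. \<forall>x\<in>sbdry (tildeT Th \<Omega>) \<inter> T.
                   norm (M x - x) \<le> c_d * diameter T * hat_h (tildeT Th \<Omega>) T powr \<zeta>)
             \<and> u \<in> Vh (tildeT Th \<Omega>)
             \<longrightarrow> ah \<alpha> (tildeT Th \<Omega>) M u u \<ge> C_a * norm_a_sq (tildeT Th \<Omega>) M u))"
proof -
  define K where "K = (2 * \<bar>\<sigma>\<bar>) ^ DIM('a) / measure lborel (ball (0::'a) 1)"
  define \<kappa> where "\<kappa> = K * real (Suc DIM('a))"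
  define \<eta> where "\<eta> = 1 / (4 * (\<kappa> + 1))"
  have "0 \<le> \<kappa>" by (simp add: \<kappa>_def K_def)
  then have \<eta>: "0 < \<eta>" "(\<eta> + \<eta>) * \<kappa> \<le> 1/2" by (auto simp: \<eta>_def field_simps)
  define \<delta> where "\<delta> = (\<eta> / c_d) powr (1 / \<zeta>)"
  have \<delta>: "0 < \<delta>" "c_d * \<delta> powr \<zeta> = \<eta>"
    using \<eta>(1) assms(11,12) by (auto simp: \<delta>_def powr_powr)
  show ?thesis
  proof (rule exI[of _ "1/2 + 1/\<eta>"], rule exI[of _ \<delta>],
      intro conjI allI impI exI[of _ "1/2 :: real"]; (elim conjE)?)
    fix \<alpha> Th M u
    assume \<alpha>: "1/2 + 1/\<eta> \<le> \<alpha>" and adm: "admissible_triangulation Th D"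
      and sr: "shape_regular \<sigma> Th" and hG: "hatGamma (tildeT Th \<Omega>) \<le> \<delta>"
      and M: "M \<in> borel_measurable borel" and u: "u \<in> Vh (tildeT Th \<Omega>)"
      and disp: "\<forall>T\<in>tildeT Th \<Omega>. \<forall>x\<in>sbdry (tildeT Th \<Omega>) \<inter> T.
                   norm (M x - x) \<le> c_d * diameter T * hat_h (tildeT Th \<Omega>) T powr \<zeta>"
    note mesh = admissible_triangulation_tildeT[OF adm, of \<Omega>]
    have "(1 - 1/2 - (\<eta> + \<eta>) * \<kappa>) * dirichlet_energy (tildeT Th \<Omega>) u
            \<le> ah \<alpha> (tildeT Th \<Omega>) M u u - 1/2 * norm_a_sq (tildeT Th \<Omega>) M u"
      unfolding \<kappa>_def K_def mult.assoc[symmetric]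
    proof (rule ah_coercive_on_mesh[OF assms(1) mesh _ u M])
      show "\<forall>T\<in>tildeT Th \<Omega>. diameter T \<le> \<sigma> * inradius T"
        using sr by (auto simp: shape_regular_def tildeT_def)
      show "\<forall>T\<in>tildeT Th \<Omega>. \<forall>x\<in>sbdry (tildeT Th \<Omega>) \<inter> T. norm (M x - x) \<le> \<eta> * diameter T"
        using displacement_le_of_hatGamma[OF mesh(1,2) hG _ assms(12) disp] assms(11) \<delta>(2) by simp
    qed (use \<eta> \<alpha> in auto)
    moreover have "0 \<le> (1 - 1/2 - (\<eta> + \<eta>) * \<kappa>) * dirichlet_energy (tildeT Th \<Omega>) u"
      using \<eta>(2) unfolding dirichlet_energy_def by (intro mult_nonneg_nonneg sum_nonneg) auto
    ultimately show "1/2 * norm_a_sq (tildeT Th \<Omega>) M u \<le> ah \<alpha> (tildeT Th \<Omega>) M u u"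
      by linarith
  qed (use \<delta> in auto)
qed

end
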